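(* Let $G$ be a Lie group, $H\subseteq G$ a closed subgroup, and $\mathfrak{g}=\mathfrak{h}\oplus\mathfrak{m}$ a reductive decomposition. Equip $G/H$ with a $G$-invariant Riemannian metric (an $\mathrm{Ad}(H)$-invariant inner product $\langle\cdot,\cdot\rangle$ on $\mathfrak{m}$) with Levi-Civita connection $\nabla$. Suppose the difference Ricci tensor $\mathrm{Ric}^d$ is a Codazzi tensor field on $G/H$ with $\nabla\mathrm{Ric}^d\neq 0$, and let $\mathfrak{m}=\mathfrak{m}_1\oplus\cdots\oplus\mathfrak{m}_r$ be its $\langle\cdot,\cdot\rangle$-orthogonal eigenspace decomposition on $\mathfrak{m}$, with $\mathfrak{m}_i$ corresponding to the eigenvalue $\lambda_i$ and $\lambda_1<\cdots<\lambda_r$. If $\mathrm{s}^d_i\ge 0$ for $1\le i\le r-1$, then $\mathrm{s}^d_r\neq 0$. In particular, not all the eigenspaces $\mathfrak{m}_i$ of $\mathrm{Ric}^d$ can be Abelian subalgebras of $(\mathfrak{m},[\cdot,\cdot]_{\mathfrak{m}})$.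
   Context: A reductive decomposition means $\mathfrak{m}$ is an $\mathrm{Ad}(H)$-invariant vector space complement of $\mathfrak{h}$ in $\mathfrak{g}$; $[X,Y]_{\mathfrak{m}}$, $[X,Y]_{\mathfrak{h}}$ are the components of $[X,Y]$ in $\mathfrak{g}=\mathfrak{h}\oplus\mathfrak{m}$, and $\mathfrak{m}\cong T_{eH}(G/H)$. $G$-invariant tensor fields correspond to $\mathrm{Ad}(H)$-invariant tensors on $\mathfrak{m}$. A Codazzi tensor field is a symmetric twice-covariant tensor field $A$ with $(\nabla_XA)(Y,Z)=(\nabla_YA)(X,Z)$ for all vector fields. The Levi-Civita product $\alpha:\mathfrak{m}\times\mathfrak{m}\to\mathfrak{m}$ is defined by $2\langle\alpha(X,Y),Z\rangle=\langle[X,Y]_{\mathfrak{m}},Z\rangle-\langle X,[Y,Z]_{\mathfrak{m}}\rangle-\langle[X,Z]_{\mathfrak{m}},Y\rangle$. The difference curvature tensor is $R^d=R-R^0$, where $R$ is the Riemann curvature at $eH$ and $R^0(X,Y)Z=-[[X,Y]_{\mathfrak{h}},Z]$ is the curvature of the canonical connection of the second kind; explicitly $R^d(X,Y)Z=\alpha(X,\alpha(Y,Z))-\alpha(Y,\alpha(X,Z))-\alpha([X,Y]_{\mathfrak{m}},Z)$ for $X,Y,Z\in\mathfrak{m}$. The difference Ricci tensor is the $G$-invariant tensor field corresponding to $\mathrm{Ric}^d(Y,Z)=\mathrm{tr}(X\mapsto R^d(X,Y)Z)$ on $\mathfrak{m}$; $\mathrm{s}^d$ is its $\langle\cdot,\cdot\rangle$-trace.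 For $Y_i,Z_i\in\mathfrak{m}_i$, the endomorphism $X\mapsto R^d(X,Y_i)Z_i$ preserves $\mathfrak{m}_i$; $\mathrm{Ric}^d_i(Y_i,Z_i)$ is the trace of its restriction to $\mathfrak{m}_i$, and $\mathrm{s}^d_i$ is the trace of $\mathrm{Ric}^d_i$ with respect to $\langle\cdot,\cdot\rangle|_{\mathfrak{m}_i\times\mathfrak{m}_i}$. *)

theory Defs
  imports "HOL-Analysis.Analysis"
begin

text \<open>
  Algebraic model of the reductive homogeneous space G/H at the origin eH.
  The Lie algebra g = h (+) m is modelled as the product type 'h \<times> 'm, where
  h = 'h \<times> {0} and m = {0} \<times> 'm.  The type 'm (class euclidean_space) carries
  the Ad(H)-invariant inner product on m (its own inner product).
\<close>

definition lie_algebra :: "(('h::real_vector \<times> 'm::real_vector) \<Rightarrow> ('h \<times> 'm) \<Rightarrow> ('h \<times> 'm)) \<Rightarrow> bool" where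
  "lie_algebra br \<longleftrightarrow>
     (\<forall>x. linear (br x)) \<and> (\<forall>y. linear (\<lambda>x. br x y)) \<and>
     (\<forall>x y. br x y = - br y x) \<and>
     (\<forall>x y z. br x (br y z) + br y (br z x) + br z (br x y) = 0)"

text \<open>Reductive decomposition: h is a subalgebra and [h,m] \<subseteq> m.
  Invariance of the inner product (infinitesimal form of Ad(H)-invariance):
  ad(A) restricted to m is skew-symmetric for A in h.\<close>
definition reductive_invariant ::
  "(('h::real_vector \<times> 'm::real_inner) \<Rightarrow> ('h \<times> 'm) \<Rightarrow> ('h \<times> 'm)) \<Rightarrow> bool" where
  "reductive_invariant br \<longleftrightarrow>
     (\<forall>a b. snd (br (a, 0) (b, 0)) = 0) \<and>
     (\<forall>a x. fst (br (a, 0) (0, x)) = 0) \<and>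
     (\<forall>a x y. inner (snd (br (a, 0) (0, x))) y + inner x (snd (br (a, 0) (0, y))) = 0)"

definition brm :: "(('h::real_vector \<times> 'm::real_vector) \<Rightarrow> ('h \<times> 'm) \<Rightarrow> ('h \<times> 'm)) \<Rightarrow> 'm \<Rightarrow> 'm \<Rightarrow> 'm" where
  "brm br X Y = snd (br (0, X) (0, Y))"

text \<open>Levi-Civita product: 2<alpha(X,Y),Z> = <[X,Y]_m,Z> - <X,[Y,Z]_m> - <[X,Z]_m,Y>,
  written out in an orthonormal basis of m.\<close>
definition lc_alpha :: "(('h::real_vector \<times> 'm::euclidean_space) \<Rightarrow> ('h \<times> 'm) \<Rightarrow> ('h \<times> 'm)) \<Rightarrow> 'm \<Rightarrow> 'm \<Rightarrow> 'm" where
  "lc_alpha br X Y = (\<Sum>e\<in>Basis.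
      ((inner (brm br X Y) e - inner X (brm br Y e) - inner (brm br X e) Y) / 2) *\<^sub>R e)"

definition Rd :: "(('h::real_vector \<times> 'm::euclidean_space) \<Rightarrow> ('h \<times> 'm) \<Rightarrow> ('h \<times> 'm)) \<Rightarrow> 'm \<Rightarrow> 'm \<Rightarrow> 'm \<Rightarrow> 'm" where
  "Rd br X Y Z = lc_alpha br X (lc_alpha br Y Z) - lc_alpha br Y (lc_alpha br X Z)
                 - lc_alpha br (brm br X Y) Z"

definition Ricd :: "(('h::real_vector \<times> 'm::euclidean_space) \<Rightarrow> ('h \<times> 'm) \<Rightarrow> ('h \<times> 'm)) \<Rightarrow> 'm \<Rightarrow> 'm \<Rightarrow> real" where
  "Ricd br Y Z = (\<Sum>e\<in>Basis. inner (Rd br e Y Z) e)"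

text \<open>Covariant derivative at eH of the G-invariant tensor field Ric^d with respect to the
  Levi-Civita connection (Nomizu: the Levi-Civita connection corresponds to
  X \<mapsto> alpha(X,-), and the canonical connection kills invariant tensors):
  (\<nabla>_X Ric^d)(Y,Z) = - Ric^d(alpha(X,Y),Z) - Ric^d(Y,alpha(X,Z)).
  By G-invariance, Codazzi / non-parallelity on G/H is equivalent to the same at eH.\<close>
definition nabla_Ricd :: "(('h::real_vector \<times> 'm::euclidean_space) \<Rightarrow> ('h \<times> 'm) \<Rightarrow> ('h \<times> 'm)) \<Rightarrow> 'm \<Rightarrow> 'm \<Rightarrow> 'm \<Rightarrow> real" where
  "nabla_Ricd br X Y Z = - Ricd br (lc_alpha br X Y) Z - Ricd br Y (lc_alpha br X Z)"

definition Ricd_codazzi :: "(('h::real_vector \<times> 'm::euclidean_space) \<Rightarrow> ('h \<times> 'm) \<Rightarrow> ('h \<times> 'm)) \<Rightarrow> bool" where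
  "Ricd_codazzi br \<longleftrightarrow>
     (\<forall>Y Z. Ricd br Y Z = Ricd br Z Y) \<and>
     (\<forall>X Y Z. nabla_Ricd br X Y Z = nabla_Ricd br Y X Z)"

definition Ricd_op :: "(('h::real_vector \<times> 'm::euclidean_space) \<Rightarrow> ('h \<times> 'm) \<Rightarrow> ('h \<times> 'm)) \<Rightarrow> 'm \<Rightarrow> 'm" where
  "Ricd_op br Y = (\<Sum>e\<in>Basis. Ricd br Y e *\<^sub>R e)"

definition Ricd_eigenvalues :: "(('h::real_vector \<times> 'm::euclidean_space) \<Rightarrow> ('h \<times> 'm) \<Rightarrow> ('h \<times> 'm)) \<Rightarrow> real set" where
  "Ricd_eigenvalues br = {l. \<exists>v. v \<noteq> 0 \<and> Ricd_op br v = l *\<^sub>R v}"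

text \<open>Number r of distinct eigenvalues, and lambda_1 < ... < lambda_r (indices 1..r).\<close>
definition n_eig :: "(('h::real_vector \<times> 'm::euclidean_space) \<Rightarrow> ('h \<times> 'm) \<Rightarrow> ('h \<times> 'm)) \<Rightarrow> nat" where
  "n_eig br = card (Ricd_eigenvalues br)"

definition eig :: "(('h::real_vector \<times> 'm::euclidean_space) \<Rightarrow> ('h \<times> 'm) \<Rightarrow> ('h \<times> 'm)) \<Rightarrow> nat \<Rightarrow> real" where
  "eig br i = sorted_list_of_set (Ricd_eigenvalues br) ! (i - 1)"

definition eigsp :: "(('h::real_vector \<times> 'm::euclidean_space) \<Rightarrow> ('h \<times> 'm) \<Rightarrow> ('h \<times> 'm)) \<Rightarrow> nat \<Rightarrow> 'm set" where
  "eigsp br i = {v. Ricd_op br v = eig br i *\<^sub>R v}"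

definition is_onb :: "'m::real_inner set \<Rightarrow> 'm set \<Rightarrow> bool" where
  "is_onb V B \<longleftrightarrow> finite B \<and> B \<subseteq> V \<and> span B = V \<and> pairwise orthogonal B \<and> (\<forall>b\<in>B. norm b = 1)"

definition onb :: "'m::real_inner set \<Rightarrow> 'm set" where
  "onb V = (SOME B. is_onb V B)"

definition Ricd_i :: "(('h::real_vector \<times> 'm::euclidean_space) \<Rightarrow> ('h \<times> 'm) \<Rightarrow> ('h \<times> 'm)) \<Rightarrow> nat \<Rightarrow> 'm \<Rightarrow> 'm \<Rightarrow> real" where
  "Ricd_i br i Y Z = (\<Sum>f\<in>onb (eigsp br i). inner (Rd br f Y Z) f)"

definition sd_i :: "(('h::real_vector \<times> 'm::euclidean_space) \<Rightarrow> ('h \<times> 'm) \<Rightarrow> ('h \<times> 'm)) \<Rightarrow> nat \<Rightarrow> real" where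
  "sd_i br i = (\<Sum>e\<in>onb (eigsp br i). Ricd_i br i e e)"

definition abelian_in_m :: "(('h::real_vector \<times> 'm::real_vector) \<Rightarrow> ('h \<times> 'm) \<Rightarrow> ('h \<times> 'm)) \<Rightarrow> 'm set \<Rightarrow> bool" where
  "abelian_in_m br V \<longleftrightarrow> (\<forall>X\<in>V. \<forall>Y\<in>V. brm br X Y = 0)"

end

theory Submission
  imports Defs
begin

text \<open>
  Fix an orthonormal basis of m consisting of eigenvectors of the difference Ricci operator.
  For basis vectors x, y, z with eigenvalues p, q, w the Codazzi condition reads
  (q - w) <alpha(x,y),z> = (p - w) <alpha(y,x),z>.  Expanding <R^d(x,y)y,x> in the basis and
  summing over the basis vectors y in m_i gives lambda_i dim m_i = s^d_i + c_i, where the cross term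
  c_i collects the x outside m_i.  By the Codazzi relations only triples with three distinct
  eigenvalues contribute to the c_i, and these contributions cancel cyclically, so the c_i sum
  to zero.  For the top eigenvalue the contributions pair up into
  2 <alpha(x,y),z> <alpha(z,x),y> <= 0, so c_r <= 0.  As nabla Ric^d /= 0 the operator is not
  scalar, so r >= 2.  If s^d_r = 0 then lambda_r <= 0, hence sum_i lambda_i dim m_i < 0, while
  this sum equals sum_i s^d_i >= 0.  Abelian eigenspaces have s^d_i = 0.
\<close>

section \<open>Orthonormal bases and self-adjoint operators\<close>

lemma sum_Basis_linear_functional:
  fixes f :: "'m::euclidean_space \<Rightarrow> real"
  assumes "linear f"
  shows "(\<Sum>e\<in>Basis. f e * inner e z) = f z"
proof -
  have "f z = f (\<Sum>e\<in>Basis. inner z e *\<^sub>R e)" by (simp add: euclidean_representation)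
  also have "\<dots> = (\<Sum>e\<in>Basis. inner z e * f e)"
    using assms by (simp add: linear_sum linear_scale)
  finally show ?thesis by (simp add: inner_commute mult.commute)
qed

lemma is_onb_UNIV_expansion:
  assumes "is_onb UNIV E"
  shows "(\<Sum>e\<in>E. inner x e *\<^sub>R e) = x"
  using assms unfolding is_onb_def by (intro orthonormal_basis_expand) auto

lemma is_onb_UNIV_parseval:
  assumes "is_onb UNIV E"
  shows "inner u v = (\<Sum>e\<in>E. inner u e * inner v e)"
proof -
  have "inner u v = inner u (\<Sum>e\<in>E. inner v e *\<^sub>R e)"
    using is_onb_UNIV_expansion[OF assms] by simp
  also have "\<dots> = (\<Sum>e\<in>E. inner u e * inner v e)"
    by (simp add: inner_sum_right mult.commute)
  finally show ?thesis .
qed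

lemma is_onb_UNIV_linear_expansion:
  assumes "is_onb UNIV E" "linear f"
  shows "f x = (\<Sum>e\<in>E. inner x e *\<^sub>R f e)"
proof -
  have "f x = f (\<Sum>e\<in>E. inner x e *\<^sub>R e)" using is_onb_UNIV_expansion[OF assms(1)] by simp
  also have "\<dots> = (\<Sum>e\<in>E. inner x e *\<^sub>R f e)" using assms(2) by (simp add: linear_sum linear_scale)
  finally show ?thesis .
qed

lemma trace_is_onb_UNIV:
  fixes T :: "'m::euclidean_space \<Rightarrow> 'm"
  assumes "is_onb UNIV E" "linear T"
  shows "(\<Sum>b\<in>Basis. inner (T b) b) = (\<Sum>e\<in>E. inner (T e) e)"
proof -
  have "(\<Sum>b\<in>Basis. inner (T b) b) = (\<Sum>b\<in>Basis. \<Sum>e\<in>E. inner b e * inner (T e) b)"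
    by (subst is_onb_UNIV_linear_expansion[OF assms]) (simp add: inner_sum_left)
  also have "\<dots> = (\<Sum>e\<in>E. \<Sum>b\<in>Basis. inner (T e) b * inner e b)"
    by (subst sum.swap) (simp add: inner_commute mult.commute)
  also have "\<dots> = (\<Sum>e\<in>E. inner (T e) e)"
    by (rule sum.cong[OF refl]) (rule euclidean_inner[symmetric])
  finally show ?thesis .
qed

lemma linear_coeff_zero_if_quadratic_nonpos:
  fixes b c :: real
  assumes "\<And>t. 2 * t * b + t\<^sup>2 * c \<le> 0"
  shows "b = 0"
proof (rule ccontr)
  assume "b \<noteq> 0"
  define d where "d = \<bar>c\<bar> + 1"
  have d: "d > 0" "2 * d + c > 0" unfolding d_def by (auto simp: abs_if)
  have "2 * (b/d) * b + (b/d)\<^sup>2 * c \<le> 0" by (rule assms)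
  then have "b\<^sup>2 * (2 * d + c) / d\<^sup>2 \<le> 0"
    using d by (simp add: field_simps power2_eq_square)
  then have "b\<^sup>2 * (2 * d + c) \<le> 0" using d by (simp add: divide_le_0_iff)
  with d \<open>b \<noteq> 0\<close> show False by (simp add: mult_le_0_iff)
qed

lemma self_adjoint_rayleigh_max_obtains:
  fixes L :: "'m::euclidean_space \<Rightarrow> 'm"
  assumes "linear L" "subspace W" "W \<noteq> {0}"
  obtains v where "v \<in> W" "norm v = 1" "\<And>u. u \<in> W \<Longrightarrow> inner (L u) u \<le> inner (L v) v * (norm u)\<^sup>2"
proof -
  define K where "K = W \<inter> sphere 0 1"
  have compact: "compact K" unfolding K_def
    by (intro closed_Int_compact closed_subspace assms compact_sphere)
  have nonempty: "K \<noteq> {}"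
  proof -
    obtain a where "a \<in> W" "a \<noteq> 0" using assms(2,3) subspace_0 by blast
    then have "a /\<^sub>R norm a \<in> K" unfolding K_def using assms(2) by (simp add: subspace_scale)
    then show ?thesis by blast
  qed
  have continuous: "continuous_on K (\<lambda>u. inner (L u) u)"
  proof -
    have "bounded_linear L" using assms(1) by (simp add: linear_conv_bounded_linear)
    then show ?thesis by (intro continuous_intros linear_continuous_on)
  qed
  obtain v where v: "v \<in> K" and vmax: "\<And>u. u \<in> K \<Longrightarrow> inner (L u) u \<le> inner (L v) v"
    using continuous_attains_sup[OF compact nonempty continuous] by blast
  have "inner (L u) u \<le> inner (L v) v * (norm u)\<^sup>2" if "u \<in> W" for u
  proof (cases "u = 0")
    case True then show ?thesis using assms(1) by (simp add: linear_0)
  next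
    case False
    have "u /\<^sub>R norm u \<in> K" unfolding K_def using False that assms(2) by (simp add: subspace_scale)
    then have "inner (L (u /\<^sub>R norm u)) (u /\<^sub>R norm u) \<le> inner (L v) v" by (rule vmax)
    moreover have "inner (L (u /\<^sub>R norm u)) (u /\<^sub>R norm u) = inner (L u) u / (norm u)\<^sup>2"
      using assms(1) by (simp add: linear_scale power2_eq_square divide_inverse)
    ultimately show ?thesis using False by (simp add: divide_le_eq)
  qed
  with v show thesis unfolding K_def by (intro that) auto
qed

lemma self_adjoint_rayleigh_max_eigenvector:
  fixes L :: "'m::euclidean_space \<Rightarrow> 'm"
  assumes lin: "linear L" and adj: "\<And>x y. inner (L x) y = inner x (L y)"
    and W: "subspace W" "\<And>w. w \<in> W \<Longrightarrow> L w \<in> W"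
    and v: "v \<in> W" "norm v = 1"
    and max: "\<And>u. u \<in> W \<Longrightarrow> inner (L u) u \<le> inner (L v) v * (norm u)\<^sup>2"
  shows "L v = inner (L v) v *\<^sub>R v"
proof -
  define M where "M = inner (L v) v"
  have orth: "inner (L v) w = 0" if w: "w \<in> W" "inner v w = 0" for w
  proof (rule linear_coeff_zero_if_quadratic_nonpos)
    fix t :: real
    have "v + t *\<^sub>R w \<in> W" using v w W(1) by (simp add: subspace_add subspace_scale)
    then have "inner (L (v + t *\<^sub>R w)) (v + t *\<^sub>R w) \<le> M * (norm (v + t *\<^sub>R w))\<^sup>2"
      unfolding M_def by (rule max)
    moreover have "inner (L (v + t *\<^sub>R w)) (v + t *\<^sub>R w) = M + 2 * t * inner (L v) w + t\<^sup>2 * inner (L w) w"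
    proof -
      have "inner (L w) v = inner (L v) w" using adj[of w v] by (simp add: inner_commute)
      then show ?thesis
        unfolding M_def using lin
        by (simp add: linear_add linear_scale power2_eq_square
            algebra_simps)
    qed
    moreover have "(norm (v + t *\<^sub>R w))\<^sup>2 = inner v v + 2 * t * inner v w + t\<^sup>2 * inner w w"
      by (simp only: power2_norm_eq_inner)
        (simp add: inner_commute algebra_simps power2_eq_square)
    then have "(norm (v + t *\<^sub>R w))\<^sup>2 = 1 + t\<^sup>2 * (norm w)\<^sup>2"
      using v(2) w(2) by (simp add: power2_norm_eq_inner[symmetric])
    ultimately show "2 * t * inner (L v) w + t\<^sup>2 * (inner (L w) w - M * (norm w)\<^sup>2) \<le> 0"
      by (simp add: algebra_simps)
  qed
  define u where "u = L v - M *\<^sub>R v"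
  have "u \<in> W" unfolding u_def using W v(1) by (simp add: subspace_diff subspace_scale)
  moreover have uv: "inner v u = 0"
    unfolding u_def M_def using v(2) by (simp add: inner_diff_right inner_commute power2_norm_eq_inner[symmetric])
  ultimately have "inner (L v) u = 0" by (rule orth)
  moreover have "inner u u = inner (L v) u - M * inner v u"
    unfolding u_def by (simp add: inner_diff_left)
  ultimately have "inner u u = 0" using uv by simp
  then show ?thesis unfolding u_def M_def by simp
qed

lemma self_adjoint_eigenvectors_span:
  fixes L :: "'m::euclidean_space \<Rightarrow> 'm"
  assumes lin: "linear L" and adj: "\<And>x y. inner (L x) y = inner x (L y)"
  shows "span {v. \<exists>l. L v = l *\<^sub>R v} = UNIV"
proof (rule ccontr)
  let ?S = "{v. \<exists>l. L v = l *\<^sub>R v}"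
  assume "span ?S \<noteq> UNIV"
  then obtain a where a: "a \<noteq> 0" "\<forall>x\<in>span ?S. inner a x = 0"
    using span_not_UNIV_orthogonal by blast
  define W where "W = {w. \<forall>x\<in>span ?S. inner w x = 0}"
  have W: "subspace W"
    unfolding subspace_def W_def by (simp add: inner_add_left)
  have "L ` ?S \<subseteq> ?S"
    using lin by (auto simp: linear_scale)
  then have "L ` span ?S \<subseteq> span ?S"
    unfolding span_linear_image[OF lin, symmetric] by (rule span_mono)
  then have LW: "L w \<in> W" if "w \<in> W" for w
    using that adj unfolding W_def by auto
  have "W \<noteq> {0}" using a unfolding W_def by auto
  then obtain v where v: "v \<in> W" "norm v = 1"
    and max: "\<And>u. u \<in> W \<Longrightarrow> inner (L u) u \<le> inner (L v) v * (norm u)\<^sup>2"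
    using self_adjoint_rayleigh_max_obtains[OF lin W] by blast
  have "v \<in> ?S"
    using self_adjoint_rayleigh_max_eigenvector[OF lin adj W LW v max] by blast
  then have "inner v v = 0" using v(1) unfolding W_def by (simp add: span_base)
  then show False using v(2) by simp
qed

section \<open>The Levi-Civita product of an antisymmetric bracket\<close>

locale m_bracket =
  fixes br :: "('h::real_vector \<times> 'm::euclidean_space) \<Rightarrow> ('h \<times> 'm) \<Rightarrow> ('h \<times> 'm)"
  assumes linear_brm: "linear (brm br X)"
    and brm_antisym: "brm br X Y = - brm br Y X"

lemma lie_algebra_imp_m_bracket:
  assumes "lie_algebra br"
  shows "m_bracket br"
proof (rule m_bracket.intro)
  fix X Y
  have lin: "linear (br (0, X))" and skew: "br (0, X) (0, Y) = - br (0, Y) (0, X)"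
    using assms unfolding lie_algebra_def by blast+
  show "linear (brm br X)"
  proof (rule linearI)
    fix Y1 Y2 show "brm br X (Y1 + Y2) = brm br X Y1 + brm br X Y2"
      using linear_add[OF lin, of "(0, Y1)" "(0, Y2)"] unfolding brm_def by simp
  next
    fix c Y show "brm br X (c *\<^sub>R Y) = c *\<^sub>R brm br X Y"
      using linear_scale[OF lin, of c "(0, Y)"] unfolding brm_def by simp
  qed
  show "brm br X Y = - brm br Y X"
    using skew unfolding brm_def by simp
qed

context m_bracket
begin

lemma linear_brm_left: "linear (\<lambda>X. brm br X Y)"
  by (subst brm_antisym) (intro linear_compose_neg linear_brm)

lemma brm_add_right: "brm br X (Y1 + Y2) = brm br X Y1 + brm br X Y2"
  and brm_scale_right: "brm br X (c *\<^sub>R Y) = c *\<^sub>R brm br X Y"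
  by (simp_all add: linear_add[OF linear_brm] linear_scale[OF linear_brm])

lemma brm_add_left: "brm br (X1 + X2) Y = brm br X1 Y + brm br X2 Y"
  and brm_scale_left: "brm br (c *\<^sub>R X) Y = c *\<^sub>R brm br X Y"
  by (simp_all add: linear_add[OF linear_brm_left] linear_scale[OF linear_brm_left])

abbreviation alpha_form :: "'m \<Rightarrow> 'm \<Rightarrow> 'm \<Rightarrow> real" where
  "alpha_form X Y Z \<equiv> inner (lc_alpha br X Y) Z"

lemma alpha_form_eq:
  "alpha_form X Y Z = (inner (brm br X Y) Z - inner X (brm br Y Z) - inner (brm br X Z) Y) / 2"
proof -
  let ?f = "\<lambda>e. (inner (brm br X Y) e - inner X (brm br Y e) - inner (brm br X e) Y) / 2"
  have "linear ?f"
    by (intro linearI)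
      (simp_all add: brm_add_right brm_scale_right inner_add_left inner_add_right field_simps)
  then have "(\<Sum>e\<in>Basis. ?f e * inner e Z) = ?f Z"
    by (rule sum_Basis_linear_functional)
  then show ?thesis
    unfolding lc_alpha_def by (simp add: inner_sum_left)
qed

lemma alpha_form_antisym: "alpha_form X Y Z = - alpha_form X Z Y"
  unfolding alpha_form_eq using brm_antisym[of Z Y] by (simp add: inner_commute field_simps)

lemma lc_alpha_diff: "lc_alpha br X Y - lc_alpha br Y X = brm br X Y"
proof (rule vector_eq_rdot[THEN iffD1], rule allI)
  fix Z
  show "inner (lc_alpha br X Y - lc_alpha br Y X) Z = inner (brm br X Y) Z"
    unfolding inner_diff_left alpha_form_eq
    using brm_antisym[of Y X] brm_antisym[of Z X] brm_antisym[of Y Z]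
    by (simp add: inner_commute field_simps)
qed

lemma linear_lc_alpha_left: "linear (\<lambda>X. lc_alpha br X Y)"
  by (intro linearI; rule vector_eq_rdot[THEN iffD1], rule allI)
    (simp add: alpha_form_eq brm_add_left brm_scale_left inner_add_left inner_add_right field_simps)+

lemma linear_lc_alpha: "linear (lc_alpha br X)"
  by (intro linearI; rule vector_eq_rdot[THEN iffD1], rule allI)
    (simp add: alpha_form_eq brm_add_left brm_add_right brm_scale_left brm_scale_right
      inner_add_left inner_add_right field_simps)+

lemma linear_Rd_left: "linear (\<lambda>X. Rd br X Y Z)"
  unfolding Rd_def
  by (intro linear_compose_sub linear_lc_alpha_left
      linear_compose[OF linear_lc_alpha_left linear_lc_alpha, unfolded o_def]
      linear_compose[OF linear_brm_left linear_lc_alpha_left, unfolded o_def]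
      linear_compose[OF linear_lc_alpha_left, unfolded o_def]
      linear_compose[OF _ linear_lc_alpha, unfolded o_def])

lemma linear_Rd: "linear (Rd br X Y)"
  unfolding Rd_def[abs_def]
  by (intro linear_compose_sub linear_lc_alpha
      linear_compose[OF linear_lc_alpha linear_lc_alpha, unfolded o_def])

lemma linear_Ricd: "linear (Ricd br Y)"
  unfolding Ricd_def
  by (intro linearI) (simp_all add: linear_add[OF linear_Rd] linear_scale[OF linear_Rd]
      inner_add_left sum.distrib sum_distrib_left)

lemma inner_brm_eq_alpha_form: "inner (brm br X Y) Z = alpha_form X Y Z - alpha_form Y X Z"
  by (simp flip: lc_alpha_diff add: inner_diff_left)

definition Rd_term :: "'m \<Rightarrow> 'm \<Rightarrow> 'm \<Rightarrow> real" where
  "Rd_term x y z = - alpha_form x x z * alpha_form y y z + alpha_form x y z * alpha_form y x z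
     + (alpha_form x y z - alpha_form y x z) * alpha_form z x y"

lemma inner_Rd_onb_expansion:
  assumes E: "is_onb UNIV E"
  shows "inner (Rd br x y y) x = (\<Sum>z\<in>E. Rd_term x y z)"
proof -
  have term1: "inner (lc_alpha br x (lc_alpha br y y)) x = - (\<Sum>z\<in>E. alpha_form x x z * alpha_form y y z)"
    using alpha_form_antisym[of x "lc_alpha br y y" x]
      is_onb_UNIV_parseval[OF E, of "lc_alpha br x x" "lc_alpha br y y"]
    by simp
  have term2: "inner (lc_alpha br y (lc_alpha br x y)) x = - (\<Sum>z\<in>E. alpha_form x y z * alpha_form y x z)"
    using alpha_form_antisym[of y "lc_alpha br x y" x]
      is_onb_UNIV_parseval[OF E, of "lc_alpha br y x" "lc_alpha br x y"]
    by (simp add: mult.commute)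
  have "lc_alpha br (brm br x y) y = (\<Sum>z\<in>E. inner (brm br x y) z *\<^sub>R lc_alpha br z y)"
    by (rule is_onb_UNIV_linear_expansion[OF E linear_lc_alpha_left])
  then have term3: "inner (lc_alpha br (brm br x y) y) x
      = - (\<Sum>z\<in>E. (alpha_form x y z - alpha_form y x z) * alpha_form z x y)"
    by (simp add: inner_sum_left alpha_form_antisym[of _ y x] inner_brm_eq_alpha_form sum_negf)
  show ?thesis
    unfolding Rd_def inner_diff_left term1 term2 term3 Rd_term_def by (simp add: sum.distrib sum_subtractf sum_negf)
qed

end

section \<open>Eigenspaces of a Codazzi difference Ricci tensor\<close>

locale codazzi_m_bracket = m_bracket br
  for br :: "('h::real_vector \<times> 'm::euclidean_space) \<Rightarrow> ('h \<times> 'm) \<Rightarrow> ('h \<times> 'm)" +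
  assumes codazzi: "Ricd_codazzi br"
begin

lemma Ricd_sym: "Ricd br Y Z = Ricd br Z Y"
  using codazzi unfolding Ricd_codazzi_def by blast

lemma nabla_Ricd_sym: "nabla_Ricd br X Y Z = nabla_Ricd br Y X Z"
  using codazzi unfolding Ricd_codazzi_def by blast

lemma inner_Ricd_op: "inner (Ricd_op br Y) Z = Ricd br Y Z"
  unfolding Ricd_op_def inner_sum_left using sum_Basis_linear_functional[OF linear_Ricd] by simp

lemma Ricd_op_self_adjoint: "inner (Ricd_op br Y) Z = inner Y (Ricd_op br Z)"
  by (metis inner_Ricd_op Ricd_sym inner_commute)

lemma linear_Ricd_op: "linear (Ricd_op br)"
  by (intro linearI; rule vector_eq_rdot[THEN iffD1], rule allI)
    (simp_all add: inner_Ricd_op inner_add_left Ricd_sym[of _ Z for Z]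
      linear_add[OF linear_Ricd] linear_scale[OF linear_Ricd])

lemma Ricd_onb_trace:
  assumes "is_onb UNIV E"
  shows "Ricd br y y = (\<Sum>x\<in>E. inner (Rd br x y y) x)"
  unfolding Ricd_def by (rule trace_is_onb_UNIV[OF assms linear_Rd_left])

lemma nabla_Ricd_eigenvectors:
  assumes "Ricd_op br v = l *\<^sub>R v" "Ricd_op br z = w *\<^sub>R z"
  shows "nabla_Ricd br u v z = (l - w) * alpha_form u v z"
proof -
  have "Ricd br (lc_alpha br u v) z = w * alpha_form u v z"
    using Ricd_sym[of "lc_alpha br u v" z] inner_Ricd_op[of z "lc_alpha br u v"] assms(2)
    by (simp add: inner_commute)
  moreover have "Ricd br v (lc_alpha br u z) = - l * alpha_form u v z"
    using inner_Ricd_op[of v "lc_alpha br u z"] assms(1) alpha_form_antisym[of u v z]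
    by (simp add: inner_commute)
  ultimately show ?thesis unfolding nabla_Ricd_def by (simp add: algebra_simps)
qed

lemma codazzi_alpha_form_eigenvectors:
  assumes "Ricd_op br x = p *\<^sub>R x" "Ricd_op br y = q *\<^sub>R y" "Ricd_op br z = w *\<^sub>R z"
  shows "(q - w) * alpha_form x y z = (p - w) * alpha_form y x z"
  using nabla_Ricd_eigenvectors[OF assms(2,3), of x] nabla_Ricd_eigenvectors[OF assms(1,3), of y]
    nabla_Ricd_sym[of x y z]
  by simp

lemma Ricd_op_eigenvectors_orthogonal:
  assumes "Ricd_op br u = a *\<^sub>R u" "Ricd_op br v = b *\<^sub>R v" "a \<noteq> b"
  shows "inner u v = 0"
proof -
  have "a * inner u v = b * inner u v"
    using Ricd_op_self_adjoint[of u v] assms by simp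
  then show ?thesis using assms(3) by simp
qed

lemma finite_Ricd_eigenvalues: "finite (Ricd_eigenvalues br)"
proof -
  define g where "g l = (SOME v. v \<noteq> 0 \<and> Ricd_op br v = l *\<^sub>R v)" for l
  have g: "g l \<noteq> 0 \<and> Ricd_op br (g l) = l *\<^sub>R g l" if "l \<in> Ricd_eigenvalues br" for l
    using that someI_ex[of "\<lambda>v. v \<noteq> 0 \<and> Ricd_op br v = l *\<^sub>R v"]
    unfolding g_def Ricd_eigenvalues_def by blast
  have "pairwise orthogonal (g ` Ricd_eigenvalues br)"
    unfolding pairwise_def orthogonal_def using g Ricd_op_eigenvectors_orthogonal by fastforce
  moreover have "0 \<notin> g ` Ricd_eigenvalues br" using g by auto
  ultimately have "finite (g ` Ricd_eigenvalues br)"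
    using pairwise_orthogonal_independent finiteI_independent by blast
  moreover have "inj_on g (Ricd_eigenvalues br)"
  proof (rule inj_onI)
    fix l1 l2 assume "l1 \<in> Ricd_eigenvalues br" "l2 \<in> Ricd_eigenvalues br" "g l1 = g l2"
    then have "l1 *\<^sub>R g l1 = l2 *\<^sub>R g l1" and "g l1 \<noteq> 0" using g by metis+
    then show "l1 = l2" by simp
  qed
  ultimately show ?thesis using finite_imageD by blast
qed

lemma length_sorted_Ricd_eigenvalues: "length (sorted_list_of_set (Ricd_eigenvalues br)) = n_eig br"
  unfolding n_eig_def by simp

lemma eig_mem_Ricd_eigenvalues:
  assumes "i \<in> {1..n_eig br}"
  shows "eig br i \<in> Ricd_eigenvalues br"
proof -
  have "i - 1 < length (sorted_list_of_set (Ricd_eigenvalues br))"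
    using assms length_sorted_Ricd_eigenvalues by auto
  then show ?thesis
    unfolding eig_def using finite_Ricd_eigenvalues nth_mem set_sorted_list_of_set by blast
qed

lemma eig_strict_mono:
  "i \<in> {1..n_eig br} \<Longrightarrow> j \<in> {1..n_eig br} \<Longrightarrow> i < j \<Longrightarrow> eig br i < eig br j"
  unfolding eig_def
  using sorted_wrt_nth_less[OF strict_sorted_list_of_set[of "Ricd_eigenvalues br"], of "i - 1" "j - 1"]
    length_sorted_Ricd_eigenvalues
  by auto

lemma eig_mono:
  assumes "i \<in> {1..n_eig br}" "j \<in> {1..n_eig br}" "i \<le> j"
  shows "eig br i \<le> eig br j"
  using eig_strict_mono[OF assms(1,2)] assms(3) by (cases "i = j") auto

lemma eig_inj: "i \<in> {1..n_eig br} \<Longrightarrow> j \<in> {1..n_eig br} \<Longrightarrow> eig br i = eig br j \<Longrightarrow> i = j"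
  by (metis eig_strict_mono less_irrefl linorder_neqE_nat)

lemma Ricd_eigenvalue_eq_eig:
  assumes "l \<in> Ricd_eigenvalues br"
  obtains i where "i \<in> {1..n_eig br}" "eig br i = l"
proof -
  have "l \<in> set (sorted_list_of_set (Ricd_eigenvalues br))"
    using assms finite_Ricd_eigenvalues by simp
  then obtain k where "k < n_eig br" "sorted_list_of_set (Ricd_eigenvalues br) ! k = l"
    using length_sorted_Ricd_eigenvalues by (metis in_set_conv_nth)
  then show thesis using that[of "Suc k"] unfolding eig_def by simp
qed

abbreviation eigsp_onb :: "nat \<Rightarrow> 'm set" where
  "eigsp_onb i \<equiv> onb (eigsp br i)"

lemma subspace_eigsp: "subspace (eigsp br i)"
  unfolding subspace_def eigsp_def
  by (simp add: linear_add[OF linear_Ricd_op] linear_scale[OF linear_Ricd_op] linear_0[OF linear_Ricd_op]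
      scaleR_add_right)

lemma is_onb_eigsp_onb: "is_onb (eigsp br i) (eigsp_onb i)"
proof -
  obtain B where "B \<subseteq> eigsp br i" "pairwise orthogonal B" "\<And>x. x \<in> B \<Longrightarrow> norm x = 1"
    "independent B" "span B = eigsp br i"
    using orthonormal_basis_subspace[OF subspace_eigsp] by metis
  then have "is_onb (eigsp br i) B" unfolding is_onb_def using finiteI_independent by blast
  then show ?thesis unfolding onb_def by (rule someI)
qed

lemma finite_eigsp_onb: "finite (eigsp_onb i)"
  and eigsp_onb_subset: "eigsp_onb i \<subseteq> eigsp br i"
  and span_eigsp_onb: "span (eigsp_onb i) = eigsp br i"
  and pairwise_orthogonal_eigsp_onb: "pairwise orthogonal (eigsp_onb i)"
  and norm_eigsp_onb: "e \<in> eigsp_onb i \<Longrightarrow> norm e = 1"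
  using is_onb_eigsp_onb[of i] unfolding is_onb_def by blast+

lemma eigsp_onb_nonempty:
  assumes "i \<in> {1..n_eig br}"
  shows "eigsp_onb i \<noteq> {}"
proof
  assume "eigsp_onb i = {}"
  then have "eigsp br i = {0}" using span_eigsp_onb[of i] by simp
  moreover obtain v where "v \<noteq> 0" "Ricd_op br v = eig br i *\<^sub>R v"
    using eig_mem_Ricd_eigenvalues[OF assms] unfolding Ricd_eigenvalues_def by blast
  ultimately show False unfolding eigsp_def by blast
qed

definition eigval :: "'m \<Rightarrow> real" where
  "eigval e = inner (Ricd_op br e) e"

lemma eigval_eigsp_onb:
  assumes "e \<in> eigsp_onb i"
  shows "eigval e = eig br i"
proof -
  have "Ricd_op br e = eig br i *\<^sub>R e" using assms eigsp_onb_subset unfolding eigsp_def by blast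
  moreover have "inner e e = 1" using power2_norm_eq_inner[of e] norm_eigsp_onb[OF assms] by simp
  ultimately show ?thesis unfolding eigval_def by simp
qed

lemma eigsp_onb_disjoint:
  assumes "i \<in> {1..n_eig br}" "j \<in> {1..n_eig br}" "i \<noteq> j"
  shows "eigsp_onb i \<inter> eigsp_onb j = {}"
proof -
  have "eig br i \<noteq> eig br j" using eig_inj assms by blast
  then show ?thesis using eigval_eigsp_onb[of _ i] eigval_eigsp_onb[of _ j] by (metis disjoint_iff)
qed

definition eigenbasis :: "'m set" where
  "eigenbasis = (\<Union>i\<in>{1..n_eig br}. eigsp_onb i)"

lemma finite_eigenbasis: "finite eigenbasis"
  unfolding eigenbasis_def using finite_eigsp_onb by simp

lemma eigsp_onb_subset_eigenbasis: "i \<in> {1..n_eig br} \<Longrightarrow> eigsp_onb i \<subseteq> eigenbasis"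
  unfolding eigenbasis_def by blast

lemma eigenbasisE:
  assumes "e \<in> eigenbasis"
  obtains i where "i \<in> {1..n_eig br}" "e \<in> eigsp_onb i" "eigval e = eig br i"
  using assms eigval_eigsp_onb unfolding eigenbasis_def by blast

lemma eigenbasis_eigenvector:
  assumes "e \<in> eigenbasis"
  shows "Ricd_op br e = eigval e *\<^sub>R e"
proof -
  obtain i where "e \<in> eigsp_onb i" "eigval e = eig br i" using assms by (rule eigenbasisE)
  then show ?thesis using eigsp_onb_subset unfolding eigsp_def by auto
qed

lemma mem_eigsp_onb_iff:
  assumes i: "i \<in> {1..n_eig br}" and e: "e \<in> eigenbasis"
  shows "e \<in> eigsp_onb i \<longleftrightarrow> eigval e = eig br i"
proof
  assume "eigval e = eig br i"
  moreover obtain j where j: "j \<in> {1..n_eig br}" "e \<in> eigsp_onb j" "eigval e = eig br j"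
    using e by (rule eigenbasisE)
  ultimately have "i = j" using eig_inj[OF i j(1)] by simp
  then show "e \<in> eigsp_onb i" using j(2) by simp
qed (rule eigval_eigsp_onb)

lemma span_eigenbasis: "span eigenbasis = UNIV"
proof -
  have "{v. \<exists>l. Ricd_op br v = l *\<^sub>R v} \<subseteq> span eigenbasis"
  proof
    fix v assume "v \<in> {v. \<exists>l. Ricd_op br v = l *\<^sub>R v}"
    then obtain l where l: "Ricd_op br v = l *\<^sub>R v" by blast
    show "v \<in> span eigenbasis"
    proof (cases "v = 0")
      case True then show ?thesis by (simp add: span_zero)
    next
      case False
      then have "l \<in> Ricd_eigenvalues br" using l unfolding Ricd_eigenvalues_def by blast
      then obtain i where i: "i \<in> {1..n_eig br}" "eig br i = l" by (rule Ricd_eigenvalue_eq_eig)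
      then have "v \<in> span (eigsp_onb i)" using span_eigsp_onb[of i] l unfolding eigsp_def by simp
      then show ?thesis using span_mono[OF eigsp_onb_subset_eigenbasis[OF i(1)]] by blast
    qed
  qed
  then show ?thesis
    using self_adjoint_eigenvectors_span[OF linear_Ricd_op Ricd_op_self_adjoint]
      span_minimal[OF _ subspace_span]
    by blast
qed

lemma n_eig_pos: "n_eig br \<ge> 1"
proof (rule ccontr)
  assume "\<not> n_eig br \<ge> 1"
  then have "eigenbasis = {}" unfolding eigenbasis_def by simp
  then have "(UNIV :: 'm set) = {0}" using span_eigenbasis by simp
  moreover obtain b :: 'm where "b \<in> Basis" using nonempty_Basis by blast
  then have "b \<noteq> 0" by (rule nonzero_Basis)
  ultimately show False by blast
qed

lemma is_onb_eigenbasis: "is_onb UNIV eigenbasis"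
proof -
  have "pairwise orthogonal eigenbasis"
  proof (unfold pairwise_def, intro ballI impI)
    fix x y assume "x \<in> eigenbasis" "y \<in> eigenbasis" "x \<noteq> y"
    then obtain i j where i: "i \<in> {1..n_eig br}" "x \<in> eigsp_onb i"
      and j: "j \<in> {1..n_eig br}" "y \<in> eigsp_onb j"
      by (metis eigenbasisE)
    show "orthogonal x y"
    proof (cases "i = j")
      case True
      then show ?thesis using pairwise_orthogonal_eigsp_onb[of i] i j \<open>x \<noteq> y\<close>
        unfolding pairwise_def by blast
    next
      case False
      then have "eig br i \<noteq> eig br j" using eig_inj i j by blast
      then show ?thesis
        using Ricd_op_eigenvectors_orthogonal i j eigsp_onb_subset unfolding orthogonal_def eigsp_def
        by blast
    qed
  qed
  then show ?thesis
    unfolding is_onb_def using finite_eigenbasis span_eigenbasis norm_eigsp_onb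
    by (auto simp: eigenbasis_def)
qed

lemma sum_eigenbasis: "(\<Sum>y\<in>eigenbasis. g y) = (\<Sum>i\<in>{1..n_eig br}. \<Sum>y\<in>eigsp_onb i. g y)"
  unfolding eigenbasis_def
  by (rule sum.UNION_disjoint) (auto simp: finite_eigsp_onb eigsp_onb_disjoint)

end

section \<open>Curvature sums over the eigenbasis\<close>

lemma cyclic_product_eq_zero:
  fixes p q w a b c :: real
  assumes "p \<noteq> q" "q \<noteq> w" "p \<noteq> w"
    and "(q - w) * a = (p - w) * b" "(q - w) * a = (p - q) * c"
  shows "a * c - b * c - a * b = 0"
proof -
  define k where "k = (q - w) * a"
  have ka: "(q - w) * a = k" and kb: "(p - w) * b = k" and kc: "(p - q) * c = k"
    using assms(4,5) unfolding k_def by simp_all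
  have "(q - w) * (p - w) * (p - q) * (a * c - b * c - a * b)
      = ((q - w) * a) * ((p - q) * c) * (p - w) - ((p - w) * b) * ((p - q) * c) * (q - w)
        - ((q - w) * a) * ((p - w) * b) * (p - q)"
    by (simp add: algebra_simps)
  also have "\<dots> = k * k * ((p - w) - (q - w) - (p - q))"
    unfolding ka kb kc by (simp add: algebra_simps)
  also have "\<dots> = 0" by simp
  finally show ?thesis using assms(1-3) by simp
qed

lemma sum_triple_rotate:
  "(\<Sum>x\<in>A. \<Sum>y\<in>A. \<Sum>z\<in>A. f y z x) = (\<Sum>x\<in>A. \<Sum>y\<in>A. \<Sum>z\<in>A. f x y z)"
proof -
  have "(\<Sum>x\<in>A. \<Sum>y\<in>A. \<Sum>z\<in>A. f y z x) = (\<Sum>y\<in>A. \<Sum>x\<in>A. \<Sum>z\<in>A. f y z x)"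
    by (rule sum.swap)
  also have "\<dots> = (\<Sum>y\<in>A. \<Sum>z\<in>A. \<Sum>x\<in>A. f y z x)"
    by (rule sum.cong[OF refl], rule sum.swap)
  finally show ?thesis .
qed

context codazzi_m_bracket
begin

lemma codazzi_eigenbasis:
  "u \<in> eigenbasis \<Longrightarrow> v \<in> eigenbasis \<Longrightarrow> w \<in> eigenbasis \<Longrightarrow>
    (eigval v - eigval w) * alpha_form u v w = (eigval u - eigval w) * alpha_form v u w"
  by (rule codazzi_alpha_form_eigenvectors) (simp_all add: eigenbasis_eigenvector)

lemma alpha_form_same_eigval_eq_zero:
  assumes "u \<in> eigenbasis" "v \<in> eigenbasis" "z \<in> eigenbasis"
    and "eigval u = eigval v" "eigval z \<noteq> eigval u"
  shows "alpha_form u v z = 0"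
proof -
  have "(eigval z - eigval v) * alpha_form u z v = (eigval u - eigval v) * alpha_form z u v"
    using assms(1,3,2) by (rule codazzi_eigenbasis)
  then have "alpha_form u z v = 0" using assms(4,5) by simp
  then show ?thesis using alpha_form_antisym[of u v z] by simp
qed

lemma Rd_term_eq_zero:
  assumes E: "x \<in> eigenbasis" "y \<in> eigenbasis" "z \<in> eigenbasis"
    and xy: "eigval x \<noteq> eigval y" and z: "eigval z = eigval x \<or> eigval z = eigval y"
  shows "Rd_term x y z = 0"
proof -
  have "alpha_form x x z * alpha_form y y z = 0"
    using alpha_form_same_eigval_eq_zero[OF E(1) E(1) E(3) refl]
      alpha_form_same_eigval_eq_zero[OF E(2) E(2) E(3) refl] z xy
    by auto
  moreover have "(eigval y - eigval z) * alpha_form x y z = (eigval x - eigval z) * alpha_form y x z"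
    using E by (rule codazzi_eigenbasis)
  moreover have "(eigval x - eigval y) * alpha_form z x y = (eigval z - eigval y) * alpha_form x z y"
    using E(3,1,2) by (rule codazzi_eigenbasis)
  ultimately show ?thesis
    using z xy alpha_form_antisym[of x z y] unfolding Rd_term_def by auto
qed

lemma Rd_term_swap_nonpos:
  assumes E: "x \<in> eigenbasis" "y \<in> eigenbasis" "z \<in> eigenbasis"
    and lt: "eigval x < eigval y" "eigval z < eigval y"
  shows "Rd_term x y z + Rd_term z y x \<le> 0"
proof -
  let ?a = "alpha_form x y z" and ?c = "alpha_form z x y"
  have "alpha_form y y z = 0" "alpha_form y y x = 0"
    using alpha_form_same_eigval_eq_zero[OF E(2) E(2) E(3) refl]
      alpha_form_same_eigval_eq_zero[OF E(2) E(2) E(1) refl] lt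
    by auto
  then have "Rd_term x y z + Rd_term z y x = 2 * ?a * ?c"
    unfolding Rd_term_def
    using alpha_form_antisym[of x z y] alpha_form_antisym[of z y x] alpha_form_antisym[of y z x]
    by (simp add: algebra_simps)
  moreover have "(eigval x - eigval y) * (?a * ?c) = (eigval y - eigval z) * ?a\<^sup>2"
  proof -
    have "(eigval z - eigval y) * alpha_form x z y = (eigval x - eigval y) * ?c"
      using E(1,3,2) by (rule codazzi_eigenbasis)
    then have c: "(eigval x - eigval y) * ?c = (eigval y - eigval z) * ?a"
      using alpha_form_antisym[of x z y] by (simp add: algebra_simps)
    have "(eigval x - eigval y) * (?a * ?c) = ?a * ((eigval x - eigval y) * ?c)"
      by (simp add: algebra_simps)
    also have "\<dots> = (eigval y - eigval z) * ?a\<^sup>2"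
      unfolding c by (simp add: algebra_simps power2_eq_square)
    finally show ?thesis .
  qed
  then have "?a * ?c \<le> 0"
    using lt by (smt (verit) mult_le_0_iff zero_le_power2 zero_le_mult_iff)
  ultimately show ?thesis by simp
qed

lemma Rd_term_cyclic_sum:
  assumes E: "x \<in> eigenbasis" "y \<in> eigenbasis" "z \<in> eigenbasis"
    and d: "eigval x \<noteq> eigval y" "eigval y \<noteq> eigval z" "eigval x \<noteq> eigval z"
  shows "Rd_term x y z + Rd_term y z x + Rd_term z x y = 0"
proof -
  let ?a = "alpha_form x y z" and ?b = "alpha_form y x z" and ?c = "alpha_form z x y"
  have "alpha_form y y z = 0" "alpha_form z z x = 0" "alpha_form x x y = 0"
    using alpha_form_same_eigval_eq_zero[OF E(2) E(2) E(3) refl]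
      alpha_form_same_eigval_eq_zero[OF E(3) E(3) E(1) refl]
      alpha_form_same_eigval_eq_zero[OF E(1) E(1) E(2) refl] d
    by auto
  then have "Rd_term x y z + Rd_term y z x + Rd_term z x y = ?a * ?c - ?b * ?c - ?a * ?b"
    unfolding Rd_term_def
    using alpha_form_antisym[of x z y] alpha_form_antisym[of z y x] alpha_form_antisym[of y z x]
    by (simp add: algebra_simps)
  also have "\<dots> = 0"
  proof (rule cyclic_product_eq_zero[OF d(1,2,3)])
    show "(eigval y - eigval z) * ?a = (eigval x - eigval z) * ?b"
      using E by (rule codazzi_eigenbasis)
    have "(eigval z - eigval y) * alpha_form x z y = (eigval x - eigval y) * ?c"
      using E(1,3,2) by (rule codazzi_eigenbasis)
    then show "(eigval y - eigval z) * ?a = (eigval x - eigval y) * ?c"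
      using alpha_form_antisym[of x z y] by (simp add: algebra_simps)
  qed
  finally show ?thesis .
qed

lemma sum_Rd_eigenbasis:
  assumes "y \<in> eigsp_onb i"
  shows "(\<Sum>x\<in>eigenbasis. inner (Rd br x y y) x) = eig br i"
proof -
  have "(\<Sum>x\<in>eigenbasis. inner (Rd br x y y) x) = Ricd br y y"
    by (rule Ricd_onb_trace[OF is_onb_eigenbasis, symmetric])
  also have "\<dots> = eigval y" unfolding eigval_def by (rule inner_Ricd_op[symmetric])
  also have "\<dots> = eig br i" using assms by (rule eigval_eigsp_onb)
  finally show ?thesis .
qed

lemma sd_i_eq: "sd_i br i = (\<Sum>y\<in>eigsp_onb i. \<Sum>x\<in>eigsp_onb i. inner (Rd br x y y) x)"
  unfolding sd_i_def Ricd_i_def ..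

definition cross_term :: "nat \<Rightarrow> real" where
  "cross_term i = (\<Sum>y\<in>eigsp_onb i. \<Sum>x\<in>eigenbasis - eigsp_onb i. inner (Rd br x y y) x)"

lemma eig_mult_card_eq:
  assumes "i \<in> {1..n_eig br}"
  shows "eig br i * card (eigsp_onb i) = sd_i br i + cross_term i"
proof -
  have "eig br i * card (eigsp_onb i) = (\<Sum>y\<in>eigsp_onb i. \<Sum>x\<in>eigenbasis. inner (Rd br x y y) x)"
    using sum_Rd_eigenbasis by simp
  also have "\<dots> = cross_term i + sd_i br i"
    unfolding cross_term_def sd_i_eq
    by (simp add: sum.subset_diff[OF eigsp_onb_subset_eigenbasis[OF assms] finite_eigenbasis]
        sum.distrib)
  finally show ?thesis by simp
qed

lemma sum_Rd_below_top_nonpos: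
  assumes y: "y \<in> eigsp_onb (n_eig br)"
  shows "(\<Sum>x\<in>eigenbasis - eigsp_onb (n_eig br). inner (Rd br x y y) x) \<le> 0"
proof -
  have r: "n_eig br \<in> {1..n_eig br}" using n_eig_pos by simp
  define D where "D = eigenbasis - eigsp_onb (n_eig br)"
  have yE: "y \<in> eigenbasis" using y eigsp_onb_subset_eigenbasis[OF r] by blast
  have lt: "eigval x < eigval y" if x: "x \<in> D" for x
  proof -
    obtain j where j: "j \<in> {1..n_eig br}" "x \<in> eigsp_onb j" "eigval x = eig br j"
      using x unfolding D_def by (blast elim: eigenbasisE)
    then have "j \<noteq> n_eig br" using x unfolding D_def by blast
    then have "j < n_eig br" using j(1) by simp
    then show ?thesis using eig_strict_mono[OF j(1) r] j(3) eigval_eigsp_onb[OF y] by simp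
  qed
  have inner_Rd: "inner (Rd br x y y) x = (\<Sum>z\<in>D. Rd_term x y z)" if x: "x \<in> D" for x
  proof -
    have "(\<Sum>z\<in>eigsp_onb (n_eig br). Rd_term x y z) = 0"
    proof (rule sum.neutral, rule ballI)
      fix z assume z: "z \<in> eigsp_onb (n_eig br)"
      then have "z \<in> eigenbasis" "eigval z = eigval y"
        using eigsp_onb_subset_eigenbasis[OF r] eigval_eigsp_onb[OF y] eigval_eigsp_onb[OF z] by auto
      then show "Rd_term x y z = 0"
        using Rd_term_eq_zero x yE lt[OF x] unfolding D_def by auto
    qed
    then show ?thesis
      unfolding inner_Rd_onb_expansion[OF is_onb_eigenbasis] D_def
      by (simp add: sum.subset_diff[OF eigsp_onb_subset_eigenbasis[OF r] finite_eigenbasis])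
  qed
  have "2 * (\<Sum>x\<in>D. \<Sum>z\<in>D. Rd_term x y z) = (\<Sum>x\<in>D. \<Sum>z\<in>D. Rd_term x y z + Rd_term z y x)"
    by (simp add: sum.distrib sum.swap[of "\<lambda>x z. Rd_term z y x"])
  also have "\<dots> \<le> 0"
    using Rd_term_swap_nonpos yE lt unfolding D_def by (intro sum_nonpos) auto
  finally show ?thesis using inner_Rd unfolding D_def by simp
qed

lemma cross_term_top_nonpos: "cross_term (n_eig br) \<le> 0"
  unfolding cross_term_def using sum_Rd_below_top_nonpos by (rule sum_nonpos)

definition Rd_term_distinct :: "'m \<Rightarrow> 'm \<Rightarrow> 'm \<Rightarrow> real" where
  "Rd_term_distinct x y z =
    (if eigval x \<noteq> eigval y \<and> eigval y \<noteq> eigval z \<and> eigval x \<noteq> eigval z then Rd_term x y z else 0)"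

lemma sum_Rd_off_eigsp:
  assumes i: "i \<in> {1..n_eig br}" and y: "y \<in> eigsp_onb i"
  shows "(\<Sum>x\<in>eigenbasis - eigsp_onb i. inner (Rd br x y y) x)
    = (\<Sum>x\<in>eigenbasis. \<Sum>z\<in>eigenbasis. Rd_term_distinct x y z)"
proof -
  have yE: "y \<in> eigenbasis" using y eigsp_onb_subset_eigenbasis[OF i] by blast
  have "eigenbasis - eigsp_onb i = {x \<in> eigenbasis. eigval x \<noteq> eigval y}"
    using mem_eigsp_onb_iff[OF i] eigval_eigsp_onb[OF y] by auto
  then have "(\<Sum>x\<in>eigenbasis - eigsp_onb i. inner (Rd br x y y) x)
      = (\<Sum>x\<in>eigenbasis. if eigval x \<noteq> eigval y then inner (Rd br x y y) x else 0)"
    by (simp add: sum.inter_filter[OF finite_eigenbasis])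
  also have "\<dots> = (\<Sum>x\<in>eigenbasis. \<Sum>z\<in>eigenbasis. Rd_term_distinct x y z)"
  proof (rule sum.cong[OF refl])
    fix x assume xE: "x \<in> eigenbasis"
    have "eigval x \<noteq> eigval y \<Longrightarrow> z \<in> eigenbasis \<Longrightarrow> Rd_term x y z = Rd_term_distinct x y z" for z
      using Rd_term_eq_zero[OF xE yE] unfolding Rd_term_distinct_def by auto
    then show "(if eigval x \<noteq> eigval y then inner (Rd br x y y) x else 0)
        = (\<Sum>z\<in>eigenbasis. Rd_term_distinct x y z)"
      unfolding inner_Rd_onb_expansion[OF is_onb_eigenbasis] Rd_term_distinct_def
      by (auto intro: sum.cong)
  qed
  finally show ?thesis .
qed

lemma sum_cross_term_eq_zero: "(\<Sum>i\<in>{1..n_eig br}. cross_term i) = 0"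
proof -
  define S where "S = (\<Sum>x\<in>eigenbasis. \<Sum>y\<in>eigenbasis. \<Sum>z\<in>eigenbasis. Rd_term_distinct x y z)"
  have "(\<Sum>i\<in>{1..n_eig br}. cross_term i)
      = (\<Sum>i\<in>{1..n_eig br}. \<Sum>y\<in>eigsp_onb i. \<Sum>x\<in>eigenbasis. \<Sum>z\<in>eigenbasis. Rd_term_distinct x y z)"
    unfolding cross_term_def by (intro sum.cong refl sum_Rd_off_eigsp) auto
  also have "\<dots> = (\<Sum>y\<in>eigenbasis. \<Sum>x\<in>eigenbasis. \<Sum>z\<in>eigenbasis. Rd_term_distinct x y z)"
    by (rule sum_eigenbasis[symmetric])
  also have "\<dots> = S" unfolding S_def by (rule sum.swap)
  finally have cross: "(\<Sum>i\<in>{1..n_eig br}. cross_term i) = S" .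
  have "3 * S = (\<Sum>x\<in>eigenbasis. \<Sum>y\<in>eigenbasis. \<Sum>z\<in>eigenbasis.
      Rd_term_distinct x y z + Rd_term_distinct y z x + Rd_term_distinct z x y)"
    unfolding S_def sum.distrib sum_triple_rotate[of "\<lambda>x y z. Rd_term_distinct z x y"]
      sum_triple_rotate[of Rd_term_distinct]
    by simp
  also have "\<dots> = 0"
    using Rd_term_cyclic_sum unfolding Rd_term_distinct_def by (intro sum.neutral ballI) auto
  finally show ?thesis using cross by simp
qed


lemma nabla_Ricd_eq_zero_if_single_eig:
  assumes "n_eig br = 1"
  shows "nabla_Ricd br X Y Z = 0"
proof -
  have eigenbasis: "Ricd_op br e = eig br 1 *\<^sub>R e" if "e \<in> eigenbasis" for e
    using that eigenbasis_eigenvector eigval_eigsp_onb unfolding eigenbasis_def assms by auto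
  have scalar: "Ricd_op br v = eig br 1 *\<^sub>R v" for v
  proof -
    have "Ricd_op br v = (\<Sum>e\<in>eigenbasis. inner v e *\<^sub>R Ricd_op br e)"
      by (rule is_onb_UNIV_linear_expansion[OF is_onb_eigenbasis linear_Ricd_op])
    also have "\<dots> = eig br 1 *\<^sub>R (\<Sum>e\<in>eigenbasis. inner v e *\<^sub>R e)"
      using eigenbasis by (simp add: scaleR_sum_right mult.commute)
    finally show ?thesis by (simp add: is_onb_UNIV_expansion[OF is_onb_eigenbasis])
  qed
  show ?thesis using nabla_Ricd_eigenvectors[OF scalar scalar] by simp
qed

lemma abelian_eigsp_sd_i_eq_zero:
  assumes i: "i \<in> {1..n_eig br}" and abelian: "abelian_in_m br (eigsp br i)"
  shows "sd_i br i = 0"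
proof -
  have brm: "brm br u v = 0" if "u \<in> eigsp_onb i" "v \<in> eigsp_onb i" for u v
    using abelian that eigsp_onb_subset unfolding abelian_in_m_def by blast
  have alpha: "alpha_form u v z = 0" if u: "u \<in> eigsp_onb i" and v: "v \<in> eigsp_onb i"
    and z: "z \<in> eigenbasis" for u v z
  proof (cases "z \<in> eigsp_onb i")
    case True
    then show ?thesis unfolding alpha_form_eq using brm u v by simp
  next
    case False
    then show ?thesis
      using alpha_form_same_eigval_eq_zero[of u v z] u v z eigsp_onb_subset_eigenbasis[OF i]
        mem_eigsp_onb_iff[OF i z] eigval_eigsp_onb[OF u] eigval_eigsp_onb[OF v]
      by auto
  qed
  have "Rd_term x y z = 0" if "x \<in> eigsp_onb i" "y \<in> eigsp_onb i" "z \<in> eigenbasis" for x y z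
    unfolding Rd_term_def using alpha that by simp
  then show ?thesis
    unfolding sd_i_eq inner_Rd_onb_expansion[OF is_onb_eigenbasis] by simp
qed

lemma sd_i_top_neq_zero:
  assumes two: "n_eig br \<ge> 2" and nonneg: "\<forall>i\<in>{1..n_eig br - 1}. sd_i br i \<ge> 0"
  shows "sd_i br (n_eig br) \<noteq> 0"
proof
  assume top: "sd_i br (n_eig br) = 0"
  let ?I = "{1..n_eig br}" and ?d = "\<lambda>i. real (card (eigsp_onb i))"
  have r: "n_eig br \<in> ?I" and one: "1 \<in> ?I" using two by auto
  have d: "?d i > 0" if "i \<in> ?I" for i
    using eigsp_onb_nonempty[OF that] finite_eigsp_onb[of i] by (simp add: card_gt_0_iff)
  have "eig br (n_eig br) * ?d (n_eig br) \<le> 0"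
    using eig_mult_card_eq[OF r] top cross_term_top_nonpos by simp
  then have top_nonpos: "eig br (n_eig br) \<le> 0" using d[OF r] by (simp add: mult_le_0_iff)
  have "\<forall>i\<in>?I. eig br i * ?d i \<le> 0"
  proof
    fix i assume i: "i \<in> ?I"
    then have "eig br i \<le> 0" using eig_mono[OF i r] top_nonpos by simp
    then show "eig br i * ?d i \<le> 0" using d[OF i] by (simp add: mult_nonpos_nonneg)
  qed
  moreover have "\<exists>i\<in>?I. eig br i * ?d i < 0"
    using eig_strict_mono[OF one r] two top_nonpos d[OF one] one
    by (auto intro!: bexI[of _ 1] mult_neg_pos)
  ultimately have "(\<Sum>i\<in>?I. eig br i * ?d i) < 0"
    using sum_strict_mono_ex1[of ?I "\<lambda>i. eig br i * ?d i" "\<lambda>_. 0"] by simp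
  moreover have "(\<Sum>i\<in>?I. eig br i * ?d i) = (\<Sum>i\<in>?I. sd_i br i)"
    using eig_mult_card_eq sum_cross_term_eq_zero by (simp add: sum.distrib)
  moreover have "sd_i br i \<ge> 0" if "i \<in> ?I" for i
    using nonneg top that by (cases "i = n_eig br") auto
  then have "(\<Sum>i\<in>?I. sd_i br i) \<ge> 0" by (rule sum_nonneg)
  ultimately show False by simp
qed

end

theorem corollary3p4:
  fixes br :: "('h::real_vector \<times> 'm::euclidean_space) \<Rightarrow> ('h \<times> 'm) \<Rightarrow> ('h \<times> 'm)"
  assumes "lie_algebra br"
    and "\<exists>B::'h set. finite B \<and> span B = UNIV"
    and "reductive_invariant br"
    and "Ricd_codazzi br"
    and "\<exists>X Y Z. nabla_Ricd br X Y Z \<noteq> 0"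
  shows "((\<forall>i\<in>{1..n_eig br - 1}. sd_i br i \<ge> 0) \<longrightarrow> sd_i br (n_eig br) \<noteq> 0)
         \<and> \<not> (\<forall>i\<in>{1..n_eig br}. abelian_in_m br (eigsp br i))"
proof -
  \<comment> \<open>Only bilinearity and antisymmetry of the bracket on m enter.\<close>
  interpret codazzi_m_bracket br
    using lie_algebra_imp_m_bracket[OF assms(1)] assms(4)
    by (simp add: codazzi_m_bracket_def codazzi_m_bracket_axioms_def)
  have two: "n_eig br \<ge> 2"
    using n_eig_pos nabla_Ricd_eq_zero_if_single_eig assms(5) by fastforce
  have top: "(\<forall>i\<in>{1..n_eig br - 1}. sd_i br i \<ge> 0) \<longrightarrow> sd_i br (n_eig br) \<noteq> 0"
    using sd_i_top_neq_zero[OF two] by blast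
  moreover have "\<not> (\<forall>i\<in>{1..n_eig br}. abelian_in_m br (eigsp br i))"
  proof
    assume "\<forall>i\<in>{1..n_eig br}. abelian_in_m br (eigsp br i)"
    then have "sd_i br i = 0" if "i \<in> {1..n_eig br}" for i
      using abelian_eigsp_sd_i_eq_zero that by blast
    then show False using top two by auto
  qed
  ultimately show ?thesis by blast
qed

end
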